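(* Let $0\le\mu\le\nu$ and let $f_1,\dots,f_\nu:\mathbb{R}^m\times\mathbb{R}^m\to\mathcal{G}^{p,q}$ satisfy $f_l(\vec x,\vec u)=s_l(\vec x,\vec u)\,i_l(\vec u)$ with $s_l$ real-valued and linear in $\vec x$ and $i_l:\mathbb{R}^m\to\mathscr I^{p,q}$, such that for every $\vec u$ the elements $i_1(\vec u),\dots,i_\nu(\vec u)$ are mutually coorthogonal blades, the elements $i_1(\vec u),\dots,i_\mu(\vec u)$ mutually commute, and the elements $i_{\mu+1}(\vec u),\dots,i_\nu(\vec u)$ mutually commute. Let $\vec B,\vec C:\mathbb{R}^m\to\mathcal{G}^{p,q}$ and $\vec A(\vec x)=\int_{\mathbb{R}^m}\vec C(\vec y)\vec B(\vec x-\vec y)\,\mathrm d^m\vec y$. For signs $\vec\sigma\in\{0,1\}^\mu$, $\vec\tau\in\{0,1\}^{\nu-\mu}$ and $\vec D:\mathbb{R}^m\to\mathcal{G}^{p,q}$ write $\mathscr F^{\vec\sigma,\vec\tau}(\vec D)(\vec u)=\int_{\mathbb{R}^m}\prod_{l=1}^{\mu}e^{-(-1)^{\sigma_l}f_l(\vec x,\vec u)}\vec D(\vec x)\prod_{l=\mu+1}^{\nu}e^{-(-1)^{\tau_{l-\mu}}f_l(\vec x,\vec u)}\,\mathrm d^m\vec x$ (products ordered with $l$ increasing), and $\mathscr F=\mathscr F^{0,0}$. Then for every $\vec u$, writing $I_1=(i_1(\vec u),\dots,i_\mu(\vec u))$ and $I_2=(i_{\mu+1}(\vec u),\dots,i_\nu(\vec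 u))$, $$\mathscr F(\vec A)(\vec u)=\sum_{\vec j'\in\{0,1\}^\mu,\ \vec k'\in\{0,1\}^{\nu-\mu}}\big(\mathscr F^{0,\vec k'}(\vec C)(\vec u)\big)_{\vec c^{\vec j'}(I_1)}\ \mathscr F^{\vec j',0}\big(\vec B_{\vec c^{\vec k'}(I_2)}\big)(\vec u)$$ and $$\mathscr F(\vec A)(\vec u)=\sum_{\vec j'\in\{0,1\}^\mu,\ \vec k'\in\{0,1\}^{\nu-\mu}}\mathscr F^{0,\vec k'}\big(\vec C_{\vec c^{\vec j'}(I_1)}\big)(\vec u)\ \big(\mathscr F^{\vec j',0}(\vec B)(\vec u)\big)_{\vec c^{\vec k'}(I_2)},$$ where $\vec B_{\vec c^{\vec k'}(I_2)}$ and $\vec C_{\vec c^{\vec j'}(I_1)}$ denote pointwise decompositions. If moreover all values $f_l(\vec x,\vec u)$ lie in the center of $\mathcal{G}^{p,q}$, then $\mathscr F(\vec A)(\vec u)=\mathscr F(\vec C)(\vec u)\,\mathscr F(\vec B)(\vec u)$.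
   Context: $\mathcal{G}^{p,q}$ is the real geometric algebra of $\mathbb{R}^{p,q}$; $\mathscr I^{p,q}=\{i\in\mathcal{G}^{p,q}: i^2\in\mathbb{R},\ i^2<0\}$ (its elements are invertible); $e^X=\sum_r X^r/r!$. Blades are coorthogonal if $\vec A\vec B=\pm\vec B\vec A$. For invertible $b$ and $X\in\mathcal{G}^{p,q}$: $X_{\vec c^0(b)}=\frac12(X+b^{-1}Xb)$, $X_{\vec c^1(b)}=\frac12(X-b^{-1}Xb)$; for invertible $b_1,\dots,b_d$ and $\vec t\in\{0,1\}^d$: $X_{\vec c^{\vec t}(b_1,\dots,b_d)}=((X_{\vec c^{t_1}(b_1)})_{\vec c^{t_2}(b_2)}\cdots)_{\vec c^{t_d}(b_d)}$. Decomposition with respect to a function value $f_k(\vec x,\vec u)=s_k i_k(\vec u)$, $s_k\neq 0$, coincides with decomposition with respect to $i_k(\vec u)$. All integrals are assumed to exist. *)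

theory Defs
  imports "HOL-Analysis.Analysis"
begin

text \<open>
The generators e_i are indexed by a finite,
linearly ordered type 'n (so p + q = CARD('n)); the set Pos of generators
squares to +1, the remaining ones square to -1 (p = card Pos, q = card (-Pos)).
A multivector is its coefficient vector with respect to the basis blades e_A,
A a set of generators, i.e. an element of the euclidean space real^('n set).
\<close>

type_synonym 'n mv = "real ^ ('n set)"

text \<open>Sign of the product of basis blades: e_A e_B = blade_sign Pos A B e_(A sym-diff B).\<close>
definition blade_sign :: "('n::{finite,linorder}) set \<Rightarrow> 'n set \<Rightarrow> 'n set \<Rightarrow> real" where
  "blade_sign Pos A B =
     (-1) ^ card {(a, b). a \<in> A \<and> b \<in> B \<and> b < a} *
     (\<Prod>i\<in>A \<inter> B. if i \<in> Pos then 1 else -1)"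

definition gprod :: "('n::{finite,linorder}) set \<Rightarrow> 'n mv \<Rightarrow> 'n mv \<Rightarrow> 'n mv" where
  "gprod Pos x y = (\<chi> C. \<Sum>A\<in>UNIV. blade_sign Pos A ((A - C) \<union> (C - A)) * x $ A * y $ ((A - C) \<union> (C - A)))"

definition wedge :: "('n::{finite,linorder}) set \<Rightarrow> 'n mv \<Rightarrow> 'n mv \<Rightarrow> 'n mv" where
  "wedge Pos x y = (\<chi> C. \<Sum>A\<in>UNIV. \<Sum>B\<in>UNIV.
      if A \<inter> B = {} \<and> A \<union> B = C then blade_sign Pos A B * x $ A * y $ B else 0)"

definition scal :: "real \<Rightarrow> ('n::finite) mv" where
  "scal r = (\<chi> A. if A = {} then r else 0)"

definition is_vector :: "('n::finite) mv \<Rightarrow> bool" where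
  "is_vector x \<longleftrightarrow> (\<forall>A. card A \<noteq> 1 \<longrightarrow> x $ A = 0)"

definition is_blade :: "('n::{finite,linorder}) set \<Rightarrow> 'n mv \<Rightarrow> bool" where
  "is_blade Pos x \<longleftrightarrow> (\<exists>r vs. (\<forall>v\<in>set vs. is_vector v) \<and> x = r *\<^sub>R foldr (wedge Pos) vs (scal 1))"

definition coorthogonal :: "('n::{finite,linorder}) set \<Rightarrow> 'n mv \<Rightarrow> 'n mv \<Rightarrow> bool" where
  "coorthogonal Pos a b \<longleftrightarrow> gprod Pos a b = gprod Pos b a \<or> gprod Pos a b = - gprod Pos b a"

text \<open>The set I^{p,q} of elements squaring to a negative real.\<close>
definition sqneg :: "('n::{finite,linorder}) set \<Rightarrow> 'n mv set" where
  "sqneg Pos = {i. \<exists>r::real. gprod Pos i i = scal r \<and> r < 0}"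

definition gcenter :: "('n::{finite,linorder}) set \<Rightarrow> 'n mv set" where
  "gcenter Pos = {z. \<forall>y. gprod Pos z y = gprod Pos y z}"

definition ginv :: "('n::{finite,linorder}) set \<Rightarrow> 'n mv \<Rightarrow> 'n mv" where
  "ginv Pos x = (SOME y. gprod Pos x y = scal 1 \<and> gprod Pos y x = scal 1)"

fun gpow :: "('n::{finite,linorder}) set \<Rightarrow> 'n mv \<Rightarrow> nat \<Rightarrow> 'n mv" where
  "gpow Pos x 0 = scal 1"
| "gpow Pos x (Suc n) = gprod Pos x (gpow Pos x n)"

definition gexp :: "('n::{finite,linorder}) set \<Rightarrow> 'n mv \<Rightarrow> 'n mv" where
  "gexp Pos x = (\<Sum>r. (1 / fact r) *\<^sub>R gpow Pos x r)"

definition gprod_list :: "('n::{finite,linorder}) set \<Rightarrow> 'n mv list \<Rightarrow> 'n mv" where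
  "gprod_list Pos xs = foldr (gprod Pos) xs (scal 1)"

text \<open>Decomposition X_{c^t(b)}; t = False means t = 0, t = True means t = 1.\<close>
definition cdec :: "('n::{finite,linorder}) set \<Rightarrow> 'n mv \<Rightarrow> bool \<Rightarrow> 'n mv \<Rightarrow> 'n mv" where
  "cdec Pos b t X = (1/2) *\<^sub>R (X + (if t then -1 else 1) *\<^sub>R gprod Pos (ginv Pos b) (gprod Pos X b))"

text \<open>Iterated decomposition X_{c^{t}(b_1,...,b_d)}, applying b_1 first.\<close>
definition cdecs :: "('n::{finite,linorder}) set \<Rightarrow> 'n mv list \<Rightarrow> bool list \<Rightarrow> 'n mv \<Rightarrow> 'n mv" where
  "cdecs Pos bs ts X = fold (\<lambda>(b, t) Y. cdec Pos b t Y) (zip bs ts) X"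

definition sgnb :: "bool \<Rightarrow> real" where
  "sgnb t = (if t then -1 else 1)"

text \<open>The transform F^{sigma,tau}(D)(u); indices l = 1..nu, sigma and tau are
  bit lists (True = 1) of lengths mu and nu - mu.\<close>
definition FT :: "('n::{finite,linorder}) set \<Rightarrow> (nat \<Rightarrow> real^'m \<Rightarrow> real^'m \<Rightarrow> 'n mv)
    \<Rightarrow> nat \<Rightarrow> nat \<Rightarrow> bool list \<Rightarrow> bool list \<Rightarrow> (real^'m \<Rightarrow> 'n mv) \<Rightarrow> real^'m \<Rightarrow> 'n mv" where
  "FT Pos f mu nu sig tau D u =
     (LINT x|lborel.
        gprod Pos
          (gprod Pos
             (gprod_list Pos (map (\<lambda>l. gexp Pos (- (sgnb (sig ! (l - 1))) *\<^sub>R f l x u)) [1..<mu+1]))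
             (D x))
          (gprod_list Pos (map (\<lambda>l. gexp Pos (- (sgnb (tau ! (l - mu - 1))) *\<^sub>R f l x u)) [mu+1..<nu+1])))"

definition gconv :: "('n::{finite,linorder}) set \<Rightarrow> (real^'m \<Rightarrow> 'n mv) \<Rightarrow> (real^'m \<Rightarrow> 'n mv) \<Rightarrow> real^'m \<Rightarrow> 'n mv" where
  "gconv Pos C B x = (LINT y|lborel. gprod Pos (C y) (B (x - y)))"

end

theory Submission
  imports Defs
begin

text \<open>Since i_l^2 is a negative real, e^(t i_l) = cos(t w) + sin(t w) i_l / w with w^2 = -i_l^2.
  Hence the exponentials of one block are additive in the linear phases s_l(x, u), and moving a
  multivector X across e^(t i_l) replaces t by -t exactly when X anticommutes with i_l. Splitting
  X = sum over t of X_{c^t(I)} into parts that commute or anticommute with each blade of a block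
  (possible because the blades are coorthogonal), the kernel at y + z of the transform of C * B
  factors as kernel(y) kernel(z), and the factor of one variable can be moved across C(y) or B(z).
  The integrand thereby becomes a finite sum of products G(y) H(z), and Fubini together with
  translation invariance of Lebesgue measure turns the transform into the claimed sums of products
  of transforms. When all f_l are central, no splitting is needed.\<close>

section \<open>The geometric product\<close>

lemma gprod_nth:
  "gprod Pos x y $ C = (\<Sum>A\<in>UNIV. blade_sign Pos A (sym_diff A C) * x $ A * y $ sym_diff A C)"
  by (simp add: gprod_def)

lemma blade_sign_eq_prod:
  "blade_sign Pos A B =
     (\<Prod>a\<in>UNIV. \<Prod>b\<in>UNIV. if a \<in> A \<and> b \<in> B \<and> b < a then -1 else 1) *
     (\<Prod>a\<in>UNIV. if a \<in> A \<and> a \<in> B \<and> a \<notin> Pos then -1 else 1)"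
proof -
  let ?S = "{(a, b). a \<in> A \<and> b \<in> B \<and> b < a}"
  have "(-1::real) ^ card ?S = (\<Prod>p\<in>UNIV. if p \<in> ?S then -1 else 1)"
    by (simp add: prod.If_cases)
  also have "\<dots> = (\<Prod>a\<in>UNIV. \<Prod>b\<in>UNIV. if a \<in> A \<and> b \<in> B \<and> b < a then -1 else 1)"
    by (simp only: prod.cartesian_product UNIV_Times_UNIV) (auto intro!: prod.cong)
  finally show ?thesis
    unfolding blade_sign_def
    by (simp add: prod.If_cases) (rule arg_cong[where f="\<lambda>S. (-1::real) ^ card S"], auto)
qed

lemma blade_sign_assoc:
  "blade_sign Pos X Y * blade_sign Pos (sym_diff X Y) Z =
   blade_sign Pos X (sym_diff Y Z) * blade_sign Pos Y Z"
proof -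
  let ?o = "\<lambda>A B a b. if a \<in> A \<and> b \<in> B \<and> b < a then -1 else (1::real)"
  let ?d = "\<lambda>A B a. if a \<in> A \<and> a \<in> B \<and> a \<notin> Pos then -1 else (1::real)"
  have pair_case: "?o X Y a b * ?o (sym_diff X Y) Z a b = ?o X (sym_diff Y Z) a b * ?o Y Z a b" for a b
    by (cases "a \<in> X"; cases "a \<in> Y"; cases "b \<in> Y"; cases "b \<in> Z"; cases "b < a"; simp)
  have diag_case: "?d X Y a * ?d (sym_diff X Y) Z a = ?d X (sym_diff Y Z) a * ?d Y Z a" for a
    by (cases "a \<in> X"; cases "a \<in> Y"; cases "a \<in> Z"; cases "a \<in> Pos"; simp)
  have pair_prods: "(\<Prod>a\<in>UNIV. \<Prod>b\<in>UNIV. ?o X Y a b) * (\<Prod>a\<in>UNIV. \<Prod>b\<in>UNIV. ?o (sym_diff X Y) Z a b)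
      = (\<Prod>a\<in>UNIV. \<Prod>b\<in>UNIV. ?o X (sym_diff Y Z) a b) * (\<Prod>a\<in>UNIV. \<Prod>b\<in>UNIV. ?o Y Z a b)"
    by (simp only: prod.distrib[symmetric] pair_case)
  have diag_prods: "(\<Prod>a\<in>UNIV. ?d X Y a) * (\<Prod>a\<in>UNIV. ?d (sym_diff X Y) Z a)
      = (\<Prod>a\<in>UNIV. ?d X (sym_diff Y Z) a) * (\<Prod>a\<in>UNIV. ?d Y Z a)"
    by (simp only: prod.distrib[symmetric] diag_case)
  have regroup: "(p1 * q1) * (p2 * q2) = (p1 * p2) * (q1 * (q2::real))" for p1 q1 p2 q2
    by (simp add: ac_simps)
  show ?thesis
    unfolding blade_sign_eq_prod by (subst (1 2) regroup) (simp only: pair_prods diag_prods)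
qed

lemma gprod_assoc:
  fixes x :: "('n::{finite,linorder}) mv"
  shows "gprod Pos (gprod Pos x y) z = gprod Pos x (gprod Pos y z)"
proof (rule vec_eq_iff[THEN iffD2], rule allI)
  fix D
  have "gprod Pos (gprod Pos x y) z $ D =
     (\<Sum>E\<in>UNIV. \<Sum>A\<in>UNIV. blade_sign Pos A (sym_diff A D) * blade_sign Pos E (sym_diff E A)
        * x $ E * y $ sym_diff E A * z $ sym_diff A D)"
    by (subst sum.swap) (simp add: gprod_nth sum_distrib_left sum_distrib_right mult.assoc mult.left_commute)
  also have "\<dots> = (\<Sum>E\<in>UNIV. \<Sum>F\<in>UNIV. blade_sign Pos (sym_diff E F) (sym_diff (sym_diff E F) D)
        * blade_sign Pos E F * x $ E * y $ F * z $ sym_diff (sym_diff E F) D)"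
  proof (rule sum.cong[OF refl])
    fix E
    have cancel: "sym_diff E (sym_diff E F) = F" for F :: "'n set"
      by auto
    show "(\<Sum>A\<in>UNIV. blade_sign Pos A (sym_diff A D) * blade_sign Pos E (sym_diff E A)
            * x $ E * y $ sym_diff E A * z $ sym_diff A D) =
        (\<Sum>F\<in>UNIV. blade_sign Pos (sym_diff E F) (sym_diff (sym_diff E F) D)
            * blade_sign Pos E F * x $ E * y $ F * z $ sym_diff (sym_diff E F) D)"
      by (rule sum.reindex_bij_witness[of _ "sym_diff E" "sym_diff E"]) (simp_all only: cancel UNIV_I)
  qed
  also have "\<dots> = (\<Sum>E\<in>UNIV. \<Sum>F\<in>UNIV. blade_sign Pos E (sym_diff E D)
        * blade_sign Pos F (sym_diff F (sym_diff E D)) * x $ E * y $ F * z $ sym_diff F (sym_diff E D))"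
  proof (intro sum.cong refl)
    fix E F
    have e: "sym_diff (sym_diff E F) D = sym_diff F (sym_diff E D)"
      "sym_diff F (sym_diff F (sym_diff E D)) = sym_diff E D"
      by auto
    show "blade_sign Pos (sym_diff E F) (sym_diff (sym_diff E F) D) * blade_sign Pos E F
          * x $ E * y $ F * z $ sym_diff (sym_diff E F) D =
        blade_sign Pos E (sym_diff E D) * blade_sign Pos F (sym_diff F (sym_diff E D))
          * x $ E * y $ F * z $ sym_diff F (sym_diff E D)"
      using blade_sign_assoc[of Pos E F "sym_diff F (sym_diff E D)"]
      unfolding e by (simp add: mult.commute mult.left_commute)
  qed
  also have "\<dots> = gprod Pos x (gprod Pos y z) $ D"
    by (simp add: gprod_nth sum_distrib_left sum_distrib_right mult.assoc mult.left_commute)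
  finally show "gprod Pos (gprod Pos x y) z $ D = gprod Pos x (gprod Pos y z) $ D" .
qed

lemma scal_nth: "scal r $ A = (if A = {} then r else 0)"
  by (simp add: scal_def)

lemma scal_eq_scaleR: "scal r = r *\<^sub>R (scal 1 :: ('n::finite) mv)"
  by (simp add: vec_eq_iff scal_nth)

lemma gprod_scal_left [simp]:
  fixes x :: "('n::{finite,linorder}) mv"
  shows "gprod Pos (scal r) x = r *\<^sub>R x"
proof -
  have "gprod Pos (scal r) x $ D = (\<Sum>A\<in>UNIV. if A = ({} :: 'n set) then r * x $ D else 0)" for D
    unfolding gprod_nth by (rule sum.cong) (auto simp: scal_nth blade_sign_def)
  then show ?thesis
    by (simp add: vec_eq_iff)
qed

lemma gprod_scal_right [simp]: "gprod Pos x (scal r) = r *\<^sub>R x"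
proof -
  have "gprod Pos x (scal r) $ D = (\<Sum>A\<in>UNIV. if A = D then x $ D * r else 0)" for D
    unfolding gprod_nth by (rule sum.cong) (auto simp: scal_nth blade_sign_def)
  then show ?thesis
    by (simp add: vec_eq_iff)
qed

lemma bounded_bilinear_gprod: "bounded_bilinear (gprod Pos)"
  unfolding bilinear_conv_bounded_bilinear[symmetric] bilinear_def
  by (auto intro!: linearI simp: vec_eq_iff gprod_nth algebra_simps sum.distrib sum_distrib_left)

lemmas gprod_add_left = bounded_bilinear.add_left[OF bounded_bilinear_gprod]
  and gprod_add_right = bounded_bilinear.add_right[OF bounded_bilinear_gprod]
  and gprod_scaleR_left = bounded_bilinear.scaleR_left[OF bounded_bilinear_gprod]
  and gprod_scaleR_right = bounded_bilinear.scaleR_right[OF bounded_bilinear_gprod]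
  and gprod_diff_left = bounded_bilinear.diff_left[OF bounded_bilinear_gprod]
  and gprod_diff_right = bounded_bilinear.diff_right[OF bounded_bilinear_gprod]
  and gprod_minus_left = bounded_bilinear.minus_left[OF bounded_bilinear_gprod]
  and gprod_minus_right = bounded_bilinear.minus_right[OF bounded_bilinear_gprod]
  and gprod_zero_left = bounded_bilinear.zero_left[OF bounded_bilinear_gprod]
  and gprod_zero_right = bounded_bilinear.zero_right[OF bounded_bilinear_gprod]
  and gprod_sum_left = bounded_bilinear.sum_left[OF bounded_bilinear_gprod]
  and gprod_sum_right = bounded_bilinear.sum_right[OF bounded_bilinear_gprod]

lemmas gprod_linear = gprod_add_left gprod_add_right gprod_scaleR_left gprod_scaleR_right
  gprod_diff_left gprod_diff_right gprod_minus_left gprod_minus_right gprod_zero_left gprod_zero_right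

lemma gcenter_left_commute:
  assumes "z \<in> gcenter Pos"
  shows "gprod Pos z (gprod Pos y X) = gprod Pos y (gprod Pos z X)"
proof -
  have "gprod Pos z y = gprod Pos y z"
    using assms by (simp add: gcenter_def)
  then show ?thesis
    by (simp only: gprod_assoc[symmetric])
qed

section \<open>Exponentials of elements with negative square\<close>

definition sqneg_root :: "('n::{finite,linorder}) set \<Rightarrow> 'n mv \<Rightarrow> real" where
  "sqneg_root Pos i = sqrt (- gprod Pos i i $ {})"

text \<open>For i^2 = -w^2 this is e^(t i), with i/w in the role of the imaginary unit.\<close>
definition gcis :: "('n::{finite,linorder}) set \<Rightarrow> 'n mv \<Rightarrow> real \<Rightarrow> 'n mv" where
  "gcis Pos i t = cos (t * sqneg_root Pos i) *\<^sub>R scal 1 + (sin (t * sqneg_root Pos i) / sqneg_root Pos i) *\<^sub>R i"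

lemma sqneg_square:
  assumes "i \<in> sqneg Pos"
  shows "gprod Pos i i = (- (sqneg_root Pos i * sqneg_root Pos i)) *\<^sub>R scal 1"
    and "sqneg_root Pos i > 0"
proof -
  obtain r where r: "gprod Pos i i = scal r" "r < 0"
    using assms by (auto simp: sqneg_def)
  then have w: "sqneg_root Pos i = sqrt (- r)"
    by (simp add: sqneg_root_def scal_nth)
  show "gprod Pos i i = (- (sqneg_root Pos i * sqneg_root Pos i)) *\<^sub>R scal 1"
    using r w by (simp add: scal_eq_scaleR[of r])
  show "sqneg_root Pos i > 0"
    using r w by simp
qed

definition complex_embed :: "('n::{finite,linorder}) mv \<Rightarrow> complex \<Rightarrow> 'n mv" where
  "complex_embed j z = Re z *\<^sub>R scal 1 + Im z *\<^sub>R j"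

lemma bounded_linear_complex_embed: "bounded_linear (complex_embed j)"
  unfolding complex_embed_def
  by (intro bounded_linear_add bounded_linear_scaleR_const bounded_linear_Re bounded_linear_Im)

lemma complex_embed_mult:
  assumes "gprod Pos j j = - scal 1"
  shows "complex_embed j (z * w) = gprod Pos (complex_embed j z) (complex_embed j w)"
  using assms by (simp add: complex_embed_def gprod_linear algebra_simps)

lemma gpow_complex_embed:
  assumes "gprod Pos j j = - scal 1"
  shows "gpow Pos (complex_embed j z) n = complex_embed j (z ^ n)"
  by (induction n) (auto simp: complex_embed_def[of j 1] complex_embed_mult[OF assms, symmetric])

lemma gexp_complex_embed:
  assumes "gprod Pos j j = - scal 1"
  shows "gexp Pos (complex_embed j z) = complex_embed j (exp z)"
proof -
  have "gexp Pos (complex_embed j z) = (\<Sum>n. complex_embed j (z ^ n /\<^sub>R fact n))"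
    unfolding gexp_def gpow_complex_embed[OF assms]
    by (simp add: linear_scale[OF bounded_linear.linear[OF bounded_linear_complex_embed]]
        divide_inverse_commute)
  also have "\<dots> = complex_embed j (\<Sum>n. z ^ n /\<^sub>R fact n)"
    by (rule bounded_linear.suminf[OF bounded_linear_complex_embed, symmetric])
      (rule summable_exp_generic)
  finally show ?thesis
    by (simp add: exp_def)
qed

lemma gexp_scaleR_sqneg:
  assumes "i \<in> sqneg Pos"
  shows "gexp Pos (t *\<^sub>R i) = gcis Pos i t"
proof -
  let ?w = "sqneg_root Pos i"
  note sq = sqneg_square[OF assms]
  define j where "j = (1 / ?w) *\<^sub>R i"
  have jj: "gprod Pos j j = - scal 1"
    using sq by (simp add: j_def gprod_linear)
  have "t *\<^sub>R i = complex_embed j (\<i> * of_real (t * ?w))"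
    using sq by (simp add: complex_embed_def j_def)
  then have "gexp Pos (t *\<^sub>R i) = complex_embed j (exp (\<i> * of_real (t * ?w)))"
    by (simp add: gexp_complex_embed[OF jj])
  also have "\<dots> = gcis Pos i t"
    by (simp add: complex_embed_def gcis_def j_def Re_exp Im_exp)
  finally show ?thesis .
qed

lemma gcis_zero [simp]: "gcis Pos i 0 = scal 1"
  by (simp add: gcis_def)

lemma gcis_add:
  assumes "i \<in> sqneg Pos"
  shows "gprod Pos (gcis Pos i a) (gcis Pos i b) = gcis Pos i (a + b)"
proof -
  let ?w = "sqneg_root Pos i"
  note sq = sqneg_square[OF assms]
  have mult: "gprod Pos (p *\<^sub>R scal 1 + q *\<^sub>R i) (p' *\<^sub>R scal 1 + q' *\<^sub>R i) =
     (p * p' - q * q' * (?w * ?w)) *\<^sub>R scal 1 + (p * q' + q * p') *\<^sub>R i" for p q p' q'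
    by (simp add: gprod_linear sq(1) algebra_simps)
  show ?thesis
    unfolding gcis_def mult using sq(2)
    by (simp add: distrib_right cos_add sin_add field_simps)
qed

lemma gcis_commute_sign:
  assumes "gprod Pos i Y = \<sigma> *\<^sub>R gprod Pos Y i" and "\<sigma> * \<sigma> = 1"
  shows "gprod Pos (gcis Pos i a) Y = gprod Pos Y (gcis Pos i (\<sigma> * a))"
proof -
  have "\<sigma> = 1 \<or> \<sigma> = -1"
    using assms(2) by (simp add: square_eq_1_iff)
  then show ?thesis
    using assms(1) by (auto simp: gcis_def gprod_linear)
qed

lemma gcis_commute:
  assumes "gprod Pos i i' = gprod Pos i' i"
  shows "gprod Pos (gcis Pos i a) (gcis Pos i' b) = gprod Pos (gcis Pos i' b) (gcis Pos i a)"
  using assms by (simp add: gcis_def gprod_linear) (simp add: scaleR_add_right ac_simps)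

lemma gcis_central:
  assumes "i \<in> gcenter Pos"
  shows "gcis Pos i a \<in> gcenter Pos"
  using assms by (simp add: gcenter_def gcis_def gprod_linear)

lemma gexp_scaleR_central:
  assumes "i \<in> sqneg Pos" and "t *\<^sub>R i \<in> gcenter Pos"
  shows "gexp Pos (c *\<^sub>R t *\<^sub>R i) \<in> gcenter Pos"
proof (cases "t = 0")
  case True
  then show ?thesis
    using gexp_scaleR_sqneg[OF assms(1), of 0] by (simp add: gcenter_def)
next
  case False
  then have "i \<in> gcenter Pos"
    using assms(2) by (simp add: gcenter_def gprod_linear)
  then show ?thesis
    using gexp_scaleR_sqneg[OF assms(1)] by (simp add: gcis_central)
qed

lemma gcis_bcontfun:
  fixes i :: "('n::{finite,linorder}) mv" and \<theta> :: "'a::t2_space \<Rightarrow> real"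
  assumes "i \<in> sqneg Pos" and "continuous_on UNIV \<theta>"
  shows "(\<lambda>x. gcis Pos i (\<theta> x)) \<in> bcontfun"
proof -
  let ?w = "sqneg_root Pos i"
  have w: "?w > 0"
    using sqneg_square(2)[OF assms(1)] .
  have "norm (gcis Pos i t) \<le> norm (scal 1 :: 'n mv) + norm i / ?w" for t
proof -
    have "norm (gcis Pos i t) \<le> norm (cos (t * ?w) *\<^sub>R (scal 1 :: 'n mv)) + norm ((sin (t * ?w) / ?w) *\<^sub>R i)"
      unfolding gcis_def by (rule norm_triangle_ineq)
    also have "\<dots> \<le> norm (scal 1 :: 'n mv) + norm i / ?w"
      using w by (intro add_mono) (auto simp: abs_mult divide_le_cancel intro!: mult_left_le_one_le mult_le_one)
    finally show ?thesis .
  qed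
  then have "bounded (range (\<lambda>x. gcis Pos i (\<theta> x)))"
    by (auto simp: bounded_iff)
  moreover have "continuous_on UNIV (\<lambda>x. gcis Pos i (\<theta> x))"
    unfolding gcis_def using w by (intro continuous_intros assms(2)) auto
  ultimately show ?thesis
    by (simp add: bcontfun_def)
qed

section \<open>Decompositions\<close>

lemma ginv_sqneg:
  assumes "i \<in> sqneg Pos"
  shows "ginv Pos i = (- 1 / (sqneg_root Pos i * sqneg_root Pos i)) *\<^sub>R i"
proof -
  note sq = sqneg_square[OF assms]
  let ?y = "(- 1 / (sqneg_root Pos i * sqneg_root Pos i)) *\<^sub>R i"
  have y: "gprod Pos i ?y = scal 1" "gprod Pos ?y i = scal 1"
    using sq by (simp_all add: gprod_linear)
  show ?thesis
    unfolding ginv_def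
  proof (rule some_equality)
    fix y
    assume "gprod Pos i y = scal 1 \<and> gprod Pos y i = scal 1"
    then have "y = gprod Pos (gprod Pos ?y i) y" and "gprod Pos i y = scal 1"
      using y by simp_all
    then show "y = ?y"
      by (simp add: gprod_assoc)
  qed (use y in simp)
qed

lemma sgnb_square [simp]: "sgnb t * sgnb t = 1"
  by (simp add: sgnb_def)

lemma cdec_sqneg:
  assumes "b \<in> sqneg Pos"
  shows "cdec Pos b t X =
    (1/2) *\<^sub>R (X + (sgnb t * (- 1 / (sqneg_root Pos b * sqneg_root Pos b))) *\<^sub>R gprod Pos b (gprod Pos X b))"
  by (simp add: cdec_def ginv_sqneg[OF assms] gprod_linear sgnb_def)

lemma cdec_commute_sign:
  assumes "b \<in> sqneg Pos"
  shows "gprod Pos b (cdec Pos b t X) = sgnb t *\<^sub>R gprod Pos (cdec Pos b t X) b"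
proof -
  note sq = sqneg_square[OF assms]
  have "gprod Pos b (gprod Pos b (gprod Pos X b)) = (- (sqneg_root Pos b * sqneg_root Pos b)) *\<^sub>R gprod Pos X b"
    and "gprod Pos (gprod Pos b (gprod Pos X b)) b = (- (sqneg_root Pos b * sqneg_root Pos b)) *\<^sub>R gprod Pos b X"
    by (simp_all add: gprod_assoc[symmetric] sq gprod_linear) (simp add: gprod_assoc sq gprod_linear)
  then show ?thesis
    unfolding cdec_sqneg[OF assms] using sq(2) by (simp add: gprod_linear algebra_simps)
qed

text \<open>Decomposing with respect to b does not change how an element (anti)commutes with a blade
  b' coorthogonal to b, since b X b then (anti)commutes with b' like X does.\<close>
lemma cdec_commute_sign_preserved:
  assumes "b \<in> sqneg Pos" and "coorthogonal Pos b' b"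
    and "gprod Pos b' Y = \<sigma> *\<^sub>R gprod Pos Y b'"
  shows "gprod Pos b' (cdec Pos b t Y) = \<sigma> *\<^sub>R gprod Pos (cdec Pos b t Y) b'"
proof -
  obtain \<epsilon> :: real where \<epsilon>: "\<epsilon> * \<epsilon> = 1" "gprod Pos b' b = \<epsilon> *\<^sub>R gprod Pos b b'"
  proof (cases "gprod Pos b' b = gprod Pos b b'")
    case True
    then show ?thesis using that[of 1] by simp
  next
    case False
    then show ?thesis using that[of "-1"] assms(2) by (simp add: coorthogonal_def)
  qed
  have "gprod Pos b' (gprod Pos b (gprod Pos Y b)) = \<epsilon> *\<^sub>R gprod Pos b (gprod Pos (gprod Pos b' Y) b)"
    using \<epsilon>(2) by (simp add: gprod_linear gprod_assoc[symmetric])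
  also have "\<dots> = (\<epsilon> * \<sigma> * \<epsilon>) *\<^sub>R gprod Pos b (gprod Pos Y (gprod Pos b b'))"
    using assms(3) \<epsilon>(2) by (simp add: gprod_linear gprod_assoc)
  also have "\<dots> = \<sigma> *\<^sub>R gprod Pos (gprod Pos b (gprod Pos Y b)) b'"
    using \<epsilon>(1) by (simp add: gprod_assoc mult.commute mult.left_commute)
  finally show ?thesis
    unfolding cdec_sqneg[OF assms(1)] by (simp add: gprod_linear assms(3) scaleR_diff_right)
qed

lemma cdecs_Cons: "cdecs Pos (b # bs) (t # ts) X = cdecs Pos bs ts (cdec Pos b t X)"
  by (simp add: cdecs_def)

lemma cdecs_Nil [simp]: "cdecs Pos [] ts X = X" "cdecs Pos bs [] X = X"
  by (simp_all add: cdecs_def)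

lemma bounded_linear_cdec: "bounded_linear (cdec Pos b t)"
  unfolding cdec_def
  by (intro bounded_linear_const_scaleR bounded_linear_add bounded_linear_ident
      bounded_bilinear.bounded_linear_right[OF bounded_bilinear_gprod, THEN bounded_linear_compose]
      bounded_bilinear.bounded_linear_left[OF bounded_bilinear_gprod])

lemma bounded_linear_cdecs: "bounded_linear (cdecs Pos bs ts)"
proof (induction bs arbitrary: ts)
  case Nil
  then show ?case
    by (simp add: bounded_linear_ident)
next
  case (Cons b bs)
  then show ?case
    by (cases ts) (auto simp: cdecs_Cons bounded_linear_ident
        intro: bounded_linear_compose[OF _ bounded_linear_cdec])
qed

lemma integrable_cdecs:
  "integrable lborel D \<Longrightarrow> integrable lborel (\<lambda>x. cdecs Pos bs ts (D x))"
  by (rule integrable_bounded_linear[OF bounded_linear_cdecs])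

lemma cdecs_commute_sign_preserved:
  assumes "\<forall>b\<in>set bs. b \<in> sqneg Pos \<and> coorthogonal Pos b' b"
    and "gprod Pos b' Y = \<sigma> *\<^sub>R gprod Pos Y b'"
  shows "gprod Pos b' (cdecs Pos bs ts Y) = \<sigma> *\<^sub>R gprod Pos (cdecs Pos bs ts Y) b'"
  using assms
proof (induction bs arbitrary: ts Y)
  case Nil
  then show ?case by simp
next
  case (Cons b bs)
  then show ?case
    by (cases ts) (auto simp: cdecs_Cons cdec_commute_sign_preserved)
qed

lemma cdecs_commute_sign:
  assumes "\<forall>b\<in>set bs. b \<in> sqneg Pos"
    and "\<forall>k<length bs. \<forall>k'<length bs. k \<noteq> k' \<longrightarrow> coorthogonal Pos (bs ! k) (bs ! k')"
    and "length ts = length bs" and "k < length bs"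
  shows "gprod Pos (bs ! k) (cdecs Pos bs ts X) = sgnb (ts ! k) *\<^sub>R gprod Pos (cdecs Pos bs ts X) (bs ! k)"
  using assms
proof (induction bs arbitrary: ts X k)
  case Nil
  then show ?case by simp
next
  case (Cons b bs)
  obtain t ts' where ts: "ts = t # ts'"
    using Cons.prems(3) by (cases ts) auto
  show ?case
  proof (cases k)
    case 0
    have "\<forall>b'\<in>set bs. b' \<in> sqneg Pos \<and> coorthogonal Pos b b'"
      using Cons.prems(1) Cons.prems(2)[rule_format, of 0 "Suc _"] by (auto simp: in_set_conv_nth)
    with Cons.prems(1) show ?thesis
      using 0 ts by (simp add: cdecs_Cons cdecs_commute_sign_preserved cdec_commute_sign)
  next
    case (Suc k')
    have "\<forall>k<length bs. \<forall>k'<length bs. k \<noteq> k' \<longrightarrow> coorthogonal Pos (bs ! k) (bs ! k')"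
      using Cons.prems(2) by (metis Suc_less_eq length_Cons nat.inject nth_Cons_Suc)
    with Cons.IH[of ts' k'] Cons.prems show ?thesis
      using Suc ts by (simp add: cdecs_Cons)
  qed
qed

lemma cdec_sum: "cdec Pos b False X + cdec Pos b True X = X"
  by (simp add: cdec_def vec_eq_iff field_simps)

lemma cdecs_sum: "(\<Sum>ts\<in>{ts. length ts = length bs}. cdecs Pos bs ts X) = X"
proof (induction bs arbitrary: X)
  case Nil
  then show ?case by simp
next
  case (Cons b bs)
  have lists: "{ts. length ts = Suc (length bs)} = (\<lambda>(t, ts). t # ts) ` (UNIV \<times> {ts. length ts = length bs})"
    by (auto simp: length_Suc_conv image_iff)
  have inj: "inj_on (\<lambda>(t, ts). t # ts) (UNIV \<times> {ts. length ts = length bs})"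
    by (auto simp: inj_on_def)
  have "(\<Sum>ts\<in>{ts. length ts = length (b # bs)}. cdecs Pos (b # bs) ts X)
      = (\<Sum>t\<in>UNIV. \<Sum>ts\<in>{ts. length ts = length bs}. cdecs Pos bs ts (cdec Pos b t X))"
    by (simp only: length_Cons lists sum.reindex[OF inj])
      (simp add: sum.cartesian_product case_prod_unfold cdecs_Cons)
  also have "\<dots> = X"
    by (simp add: Cons.IH UNIV_bool cdec_sum add.commute)
  finally show ?case .
qed

section \<open>Ordered products and bounded continuous kernels\<close>

lemma gprod_list_Nil [simp]: "gprod_list Pos [] = scal 1"
  by (simp add: gprod_list_def)

lemma gprod_list_Cons [simp]: "gprod_list Pos (x # xs) = gprod Pos x (gprod_list Pos xs)"
  by (simp add: gprod_list_def)

lemma gprod_list_commute: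
  assumes "\<forall>l\<in>set ls. gprod Pos (a l) Y = gprod Pos Y (a' l)"
  shows "gprod Pos (gprod_list Pos (map a ls)) Y = gprod Pos Y (gprod_list Pos (map a' ls))"
  using assms
proof (induction ls)
  case Nil
  then show ?case by simp
next
  case (Cons l ls)
  then have IH: "gprod Pos (gprod_list Pos (map a ls)) Y = gprod Pos Y (gprod_list Pos (map a' ls))"
    by simp
  have "gprod Pos (gprod_list Pos (map a (l # ls))) Y = gprod Pos (a l) (gprod Pos (gprod_list Pos (map a ls)) Y)"
    by (simp add: gprod_assoc)
  also have "\<dots> = gprod Pos (gprod Pos (a l) Y) (gprod_list Pos (map a' ls))"
    by (simp only: IH gprod_assoc)
  also have "\<dots> = gprod Pos Y (gprod_list Pos (map a' (l # ls)))"
    using Cons.prems by (simp add: gprod_assoc[symmetric])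
  finally show ?case .
qed

lemma gprod_list_map_gprod:
  assumes "\<forall>l\<in>set ls. \<forall>l'\<in>set ls. gprod Pos (b l) (a l') = gprod Pos (a l') (b l)"
  shows "gprod_list Pos (map (\<lambda>l. gprod Pos (a l) (b l)) ls) =
    gprod Pos (gprod_list Pos (map a ls)) (gprod_list Pos (map b ls))"
  using assms
proof (induction ls)
  case Nil
  then show ?case by simp
next
  case (Cons l ls)
  have "gprod Pos (b l) (gprod_list Pos (map a ls)) = gprod Pos (gprod_list Pos (map a ls)) (b l)"
    using gprod_list_commute[where ls=ls and a=a and Y="b l" and a'=a] Cons.prems by simp
  with Cons show ?case
    by (simp add: gprod_assoc) (simp add: gprod_assoc[symmetric])
qed

lemma gprod_list_central:
  assumes "\<forall>l\<in>set ls. a l \<in> gcenter Pos"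
  shows "gprod_list Pos (map a ls) \<in> gcenter Pos"
  using assms gprod_list_commute[where ls=ls and a=a and a'=a] by (simp add: gcenter_def)

lemma continuous_on_gprod [continuous_intros]:
  "continuous_on S f \<Longrightarrow> continuous_on S g \<Longrightarrow> continuous_on S (\<lambda>x. gprod Pos (f x) (g x))"
  by (rule bounded_bilinear.continuous_on[OF bounded_bilinear_gprod])

lemma borel_measurable_gprod [measurable (raw)]:
  fixes f g :: "'a \<Rightarrow> ('n::{finite,linorder}) mv"
  shows "f \<in> borel_measurable M \<Longrightarrow> g \<in> borel_measurable M \<Longrightarrow> (\<lambda>x. gprod Pos (f x) (g x)) \<in> borel_measurable M"
  by (rule borel_measurable_continuous_Pair) (auto intro!: continuous_intros)

lemma gprod_bcontfun:
  assumes "P \<in> bcontfun" and "Q \<in> bcontfun"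
  shows "(\<lambda>x. gprod Pos (P x) (Q x)) \<in> bcontfun"
proof -
  obtain K where K: "K > 0" "\<forall>a b. norm (gprod Pos a b) \<le> norm a * norm b * K"
    using bounded_bilinear.pos_bounded[OF bounded_bilinear_gprod] by blast
  obtain c1 c2 where c: "\<forall>x. norm (P x) \<le> c1" "\<forall>x. norm (Q x) \<le> c2"
    using assms by (auto simp: bcontfun_def bounded_iff)
  have "norm (gprod Pos (P x) (Q x)) \<le> c1 * c2 * K" for x
proof -
    have "norm (gprod Pos (P x) (Q x)) \<le> norm (P x) * norm (Q x) * K"
      using K by blast
    also have "\<dots> \<le> c1 * c2 * K"
      using c[rule_format, of x] K(1)
      by (intro mult_right_mono mult_mono) (auto intro: order.trans[OF norm_ge_zero])
    finally show ?thesis .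
  qed
  with assms show ?thesis
    by (auto simp: bcontfun_def bounded_iff intro!: continuous_intros)
qed

lemma gprod_list_bcontfun:
  assumes "\<forall>l\<in>set ls. a l \<in> bcontfun"
  shows "(\<lambda>x. gprod_list Pos (map (\<lambda>l. a l x) ls)) \<in> bcontfun"
  using assms by (induction ls) (simp_all add: const_bcontfun gprod_bcontfun)

lemma integrable_gprod_bcontfun:
  fixes D :: "'a::euclidean_space \<Rightarrow> ('n::{finite,linorder}) mv"
  assumes "P \<in> bcontfun" and "integrable lborel D"
  shows "integrable lborel (\<lambda>x. gprod Pos (P x) (D x))"
    and "integrable lborel (\<lambda>x. gprod Pos (D x) (P x))"
proof -
  obtain K where K: "K > 0" "\<forall>a b. norm (gprod Pos a b) \<le> norm a * norm b * K"
    using bounded_bilinear.pos_bounded[OF bounded_bilinear_gprod] by blast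
  obtain c where c: "\<forall>x. norm (P x) \<le> c"
    using assms by (auto simp: bcontfun_def bounded_iff)
  then have "c \<ge> 0"
    using norm_ge_zero order.trans by blast
  have [measurable]: "P \<in> borel_measurable borel" "D \<in> borel_measurable borel"
    using assms by (auto simp: bcontfun_def intro: borel_measurable_continuous_onI)
  have bound: "norm (P x) * norm (D x) * K \<le> norm ((c * K) *\<^sub>R D x)" for x
proof -
    have "norm (P x) * norm (D x) * K \<le> c * norm (D x) * K"
      using c K(1) by (intro mult_right_mono) auto
    also have "\<dots> = norm ((c * K) *\<^sub>R D x)"
      using \<open>c \<ge> 0\<close> K(1) by (simp add: abs_mult mult_ac)
    finally show ?thesis .
  qed
  have pointwise: "norm (gprod Pos (P x) (D x)) \<le> norm ((c * K) *\<^sub>R D x)"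
    "norm (gprod Pos (D x) (P x)) \<le> norm ((c * K) *\<^sub>R D x)" for x
    using order.trans[OF K(2)[rule_format] bound]
      order.trans[OF K(2)[rule_format, of "D x" "P x"], of "norm ((c * K) *\<^sub>R D x)"] bound[of x]
    by (auto simp: mult.commute)
  show "integrable lborel (\<lambda>x. gprod Pos (P x) (D x))"
    and "integrable lborel (\<lambda>x. gprod Pos (D x) (P x))"
    by (rule Bochner_Integration.integrable_bound[OF integrable_scaleR_right[OF assms(2), of "c * K"]];
        use pointwise in auto)+
qed

section \<open>Transforms of convolutions\<close>

lemma lborel_integral_translate:
  fixes g :: "'a::euclidean_space \<Rightarrow> 'b::{banach, second_countable_topology}"
  assumes "g \<in> borel_measurable borel"
  shows "(\<integral>z. g (y + z) \<partial>lborel) = integral\<^sup>L lborel g"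
proof -
  have "integral\<^sup>L lborel g = integral\<^sup>L (distr lborel borel ((+) y)) g"
    by (simp add: lborel_distr_plus)
  also have "\<dots> = (\<integral>z. g (y + z) \<partial>lborel)"
    by (rule integral_distr) (use assms in auto)
  finally show ?thesis ..
qed

lemma lborel_integrable_translate:
  fixes g :: "'a::euclidean_space \<Rightarrow> 'b::{banach, second_countable_topology}"
  assumes "g \<in> borel_measurable borel"
  shows "integrable lborel (\<lambda>z. g (y + z)) \<longleftrightarrow> integrable lborel g"
proof -
  have "integrable lborel g \<longleftrightarrow> integrable (distr lborel borel ((+) y)) g"
    by (simp add: lborel_distr_plus)
  also have "\<dots> \<longleftrightarrow> integrable lborel (\<lambda>z. g (y + z))"
    by (rule integrable_distr_eq) (use assms in auto)
  finally show ?thesis ..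
qed

lemma integrable_norm_convolution:
  fixes B :: "'a::euclidean_space \<Rightarrow> 'b::{banach, second_countable_topology}"
    and C :: "'a \<Rightarrow> 'c::{banach, second_countable_topology}"
  assumes B: "integrable lborel B" and C: "integrable lborel C"
  shows "integrable (lborel \<Otimes>\<^sub>M lborel) (\<lambda>(y, x). norm (C y) * norm (B (x - y)))"
proof (rule lborel_pair.Fubini_integrable)
  have [measurable]: "B \<in> borel_measurable borel" "C \<in> borel_measurable borel"
    using B C by auto
  show "(\<lambda>(y, x). norm (C y) * norm (B (x - y))) \<in> borel_measurable (lborel \<Otimes>\<^sub>M lborel)"
    by measurable
  have "integrable lborel (\<lambda>x. norm (B (- y + x)))" for y
    by (subst lborel_integrable_translate) (auto intro: B)
  then show "AE y in lborel. integrable lborel (\<lambda>x. case (y, x) of (y, x) \<Rightarrow> norm (C y) * norm (B (x - y)))"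
    by auto
  have "(\<integral>x. norm (B (- y + x)) \<partial>lborel) = (\<integral>x. norm (B x) \<partial>lborel)" for y
    by (rule lborel_integral_translate) simp
  then have "(\<lambda>y. \<integral>x. norm (case (y, x) of (y, x) \<Rightarrow> norm (C y) * norm (B (x - y))) \<partial>lborel)
      = (\<lambda>y. norm (C y) * (\<integral>x. norm (B x) \<partial>lborel))"
    by (simp add: abs_mult)
  then show "integrable lborel (\<lambda>y. \<integral>x. norm (case (y, x) of (y, x) \<Rightarrow> norm (C y) * norm (B (x - y))) \<partial>lborel)"
    using C by simp
qed

lemma integrable_convolution_sandwich:
  fixes P Q B C :: "'a::euclidean_space \<Rightarrow> ('n::{finite,linorder}) mv"
  assumes "P \<in> bcontfun" and "Q \<in> bcontfun"
    and B: "integrable lborel B" and C: "integrable lborel C"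
  shows "integrable (lborel \<Otimes>\<^sub>M lborel)
    (\<lambda>(y, x). gprod Pos (gprod Pos (P x) (gprod Pos (C y) (B (x - y)))) (Q x))"
proof -
  obtain K where K: "K > 0" "\<forall>a b. norm (gprod Pos a b) \<le> norm a * norm b * K"
    using bounded_bilinear.pos_bounded[OF bounded_bilinear_gprod] by blast
  obtain c1 c2 where c: "\<forall>x. norm (P x) \<le> c1" "\<forall>x. norm (Q x) \<le> c2"
    using assms by (auto simp: bcontfun_def bounded_iff)
  then have c0: "c1 \<ge> 0" "c2 \<ge> 0"
    using norm_ge_zero order.trans by blast+
  have [measurable]: "B \<in> borel_measurable borel" "C \<in> borel_measurable borel"
    "P \<in> borel_measurable borel" "Q \<in> borel_measurable borel"
    using assms by (auto simp: bcontfun_def intro: borel_measurable_continuous_onI)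
  let ?M = "c1 * c2 * (K * K * K)"
  have "norm (gprod Pos (gprod Pos (P x) (gprod Pos (C y) (B (x - y)))) (Q x))
      \<le> ?M * (norm (C y) * norm (B (x - y)))" for x y
proof -
    have "norm (gprod Pos (gprod Pos (P x) (gprod Pos (C y) (B (x - y)))) (Q x))
        \<le> norm (P x) * (norm (C y) * norm (B (x - y)) * K) * K * norm (Q x) * K"
      using K by (intro order.trans[OF K(2)[rule_format]] mult_right_mono order.trans[OF K(2)[rule_format]]
          mult_left_mono) (auto simp: mult_ac)
    also have "\<dots> = (norm (P x) * norm (Q x)) * (K * K * K * (norm (C y) * norm (B (x - y))))"
      by (simp add: mult_ac)
    also have "\<dots> \<le> (c1 * c2) * (K * K * K * (norm (C y) * norm (B (x - y))))"
      using c[rule_format] c0 K(1) by (intro mult_right_mono mult_mono) auto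
    finally show ?thesis
      by (simp add: mult_ac)
  qed
  then show ?thesis
    using K(1) c0
    by (intro Bochner_Integration.integrable_bound[OF
          integrable_mult_right[OF integrable_norm_convolution[OF B C], of ?M]])
      (auto intro!: AE_I2 simp: split_beta abs_mult)
qed

lemma integral_sandwich_gconv:
  fixes P Q B C :: "real^'m \<Rightarrow> ('n::{finite,linorder}) mv"
  assumes "P \<in> bcontfun" and "Q \<in> bcontfun"
    and B: "integrable lborel B" and C: "integrable lborel C"
  shows "(\<integral>x. gprod Pos (gprod Pos (P x) (gconv Pos C B x)) (Q x) \<partial>lborel)
       = (\<integral>x. \<integral>y. gprod Pos (gprod Pos (P x) (gprod Pos (C y) (B (x - y)))) (Q x) \<partial>lborel \<partial>lborel)"
proof (rule integral_cong_AE)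
  have [measurable]: "B \<in> borel_measurable borel" "C \<in> borel_measurable borel"
    "P \<in> borel_measurable borel" "Q \<in> borel_measurable borel"
    using assms by (auto simp: bcontfun_def intro: borel_measurable_continuous_onI)
  show "(\<lambda>x. gprod Pos (gprod Pos (P x) (gconv Pos C B x)) (Q x)) \<in> borel_measurable lborel"
    and "(\<lambda>x. \<integral>y. gprod Pos (gprod Pos (P x) (gprod Pos (C y) (B (x - y)))) (Q x) \<partial>lborel) \<in> borel_measurable lborel"
    unfolding gconv_def by measurable
  have "integrable (lborel \<Otimes>\<^sub>M lborel) (\<lambda>(y, x). gprod Pos (C y) (B (x - y)))"
    using integrable_convolution_sandwich[OF const_bcontfun const_bcontfun B C, of Pos "scal 1" "scal 1"]
    by simp
  from lborel_pair.AE_integrable_snd[OF this]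
  show "AE x in lborel. gprod Pos (gprod Pos (P x) (gconv Pos C B x)) (Q x) =
      (\<integral>y. gprod Pos (gprod Pos (P x) (gprod Pos (C y) (B (x - y)))) (Q x) \<partial>lborel)"
  proof eventually_elim
    case (elim x)
    have "bounded_linear (\<lambda>v. gprod Pos (gprod Pos (P x) v) (Q x))"
      by (intro bounded_linear_compose[OF bounded_bilinear.bounded_linear_left[OF bounded_bilinear_gprod]]
          bounded_bilinear.bounded_linear_right[OF bounded_bilinear_gprod])
    from integral_bounded_linear[OF this elim] show ?case
      by (simp add: gconv_def)
  qed
qed

text \<open>After Fubini and the substitution x = y + z, an identity separating the integrand into
  products G(y) H(z) splits the transform of a convolution.\<close>
lemma integral_convolution_sandwich_split:
  fixes P Q B C :: "real^'m \<Rightarrow> ('n::{finite,linorder}) mv"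
    and G H :: "'p \<Rightarrow> real^'m \<Rightarrow> 'n mv"
  assumes P: "P \<in> bcontfun" and Q: "Q \<in> bcontfun"
    and B: "integrable lborel B" and C: "integrable lborel C"
    and G: "\<And>p. p \<in> S \<Longrightarrow> integrable lborel (G p)"
    and H: "\<And>p. p \<in> S \<Longrightarrow> integrable lborel (H p)"
    and split: "\<And>y z. gprod Pos (gprod Pos (P (y + z)) (gprod Pos (C y) (B z))) (Q (y + z))
                 = (\<Sum>p\<in>S. gprod Pos (G p y) (H p z))"
  shows "(\<integral>x. gprod Pos (gprod Pos (P x) (gconv Pos C B x)) (Q x) \<partial>lborel)
       = (\<Sum>p\<in>S. gprod Pos (\<integral>y. G p y \<partial>lborel) (\<integral>z. H p z \<partial>lborel))"
proof -
  define \<Psi> where "\<Psi> y x = gprod Pos (gprod Pos (P x) (gprod Pos (C y) (B (x - y)))) (Q x)" for y x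
  have \<Psi>: "integrable (lborel \<Otimes>\<^sub>M lborel) (case_prod \<Psi>)"
    unfolding \<Psi>_def using integrable_convolution_sandwich[OF P Q B C] by simp
  have "(\<integral>x. gprod Pos (gprod Pos (P x) (gconv Pos C B x)) (Q x) \<partial>lborel) = (\<integral>y. \<integral>x. \<Psi> y x \<partial>lborel \<partial>lborel)"
    unfolding integral_sandwich_gconv[OF P Q B C] \<Psi>_def[symmetric]
    using lborel_pair.integral_snd[OF \<Psi>] lborel_pair.integral_fst[OF \<Psi>] by simp
  also have "\<dots> = (\<integral>y. (\<Sum>p\<in>S. gprod Pos (G p y) (\<integral>z. H p z \<partial>lborel)) \<partial>lborel)"
  proof (rule Bochner_Integration.integral_cong[OF refl])
    fix y
    have "B \<in> borel_measurable borel" "P \<in> borel_measurable borel" "Q \<in> borel_measurable borel"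
      using assms by (auto simp: bcontfun_def intro: borel_measurable_continuous_onI)
    then have "(\<integral>x. \<Psi> y x \<partial>lborel) = (\<integral>z. \<Psi> y (y + z) \<partial>lborel)"
      by (intro lborel_integral_translate[symmetric]) (simp add: \<Psi>_def)
    also have "\<dots> = (\<integral>z. (\<Sum>p\<in>S. gprod Pos (G p y) (H p z)) \<partial>lborel)"
      by (simp add: \<Psi>_def split)
    also have "\<dots> = (\<Sum>p\<in>S. gprod Pos (G p y) (\<integral>z. H p z \<partial>lborel))"
      using H by (simp add: integral_bounded_linear[OF bounded_bilinear.bounded_linear_right[OF bounded_bilinear_gprod]]
          integrable_bounded_linear[OF bounded_bilinear.bounded_linear_right[OF bounded_bilinear_gprod]])
    finally show "(\<integral>x. \<Psi> y x \<partial>lborel) = (\<Sum>p\<in>S. gprod Pos (G p y) (\<integral>z. H p z \<partial>lborel))" .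
  qed
  also have "\<dots> = (\<Sum>p\<in>S. gprod Pos (\<integral>y. G p y \<partial>lborel) (\<integral>z. H p z \<partial>lborel))"
    using G by (simp add: integral_bounded_linear[OF bounded_bilinear.bounded_linear_left[OF bounded_bilinear_gprod]]
        integrable_bounded_linear[OF bounded_bilinear.bounded_linear_left[OF bounded_bilinear_gprod]])
  finally show ?thesis .
qed

section \<open>Blocks of exponential factors\<close>

text \<open>The exponential factors with indices d, ..., e - 1 of the transform at a fixed frequency u;
  the sign of the factor with index l is read from position l - d of a sign list.\<close>
locale exp_block =
  fixes Pos :: "('n::{finite,linorder}) set"
    and s :: "nat \<Rightarrow> 'a::euclidean_space \<Rightarrow> 'u \<Rightarrow> real"
    and i :: "nat \<Rightarrow> 'u \<Rightarrow> 'n mv"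
    and f :: "nat \<Rightarrow> 'a \<Rightarrow> 'u \<Rightarrow> 'n mv"
    and d e :: nat
    and u :: 'u
  assumes f_eq: "\<And>l x. l \<in> {d..<e} \<Longrightarrow> f l x u = s l x u *\<^sub>R i l u"
    and s_linear: "\<And>l. l \<in> {d..<e} \<Longrightarrow> linear (\<lambda>x. s l x u)"
    and i_sqneg: "\<And>l. l \<in> {d..<e} \<Longrightarrow> i l u \<in> sqneg Pos"
    and i_coorthogonal: "\<And>l l'. l \<in> {d..<e} \<Longrightarrow> l' \<in> {d..<e} \<Longrightarrow> l \<noteq> l' \<Longrightarrow>
                          coorthogonal Pos (i l u) (i l' u)"
    and i_commute: "\<And>l l'. l \<in> {d..<e} \<Longrightarrow> l' \<in> {d..<e} \<Longrightarrow>
                          gprod Pos (i l u) (i l' u) = gprod Pos (i l' u) (i l u)"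
begin

definition kernel :: "bool list \<Rightarrow> 'a \<Rightarrow> 'n mv" where
  "kernel sig x = gprod_list Pos (map (\<lambda>l. gexp Pos (- (sgnb (sig ! (l - d))) *\<^sub>R f l x u)) [d..<e])"

definition blades :: "'n mv list" where
  "blades = map (\<lambda>l. i l u) [d..<e]"

lemma s_add: "l \<in> {d..<e} \<Longrightarrow> s l (y + z) u = s l y u + s l z u"
  using linear_add[OF s_linear] by blast

lemma kernel_gcis:
  "kernel sig x = gprod_list Pos (map (\<lambda>l. gcis Pos (i l u) (- sgnb (sig ! (l - d)) * s l x u)) [d..<e])"
  unfolding kernel_def
proof (intro arg_cong[where f="gprod_list Pos"] map_cong refl)
  fix l
  assume "l \<in> set [d..<e]"
  then have l: "l \<in> {d..<e}"
    by simp
  show "gexp Pos (- sgnb (sig ! (l - d)) *\<^sub>R f l x u) = gcis Pos (i l u) (- sgnb (sig ! (l - d)) * s l x u)"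
    by (simp only: f_eq[OF l] scaleR_scaleR gexp_scaleR_sqneg[OF i_sqneg[OF l]])
qed

lemma kernel_bcontfun: "kernel sig \<in> bcontfun"
  unfolding kernel_gcis[abs_def]
proof (intro gprod_list_bcontfun ballI)
  fix l
  assume "l \<in> set [d..<e]"
  then have l: "l \<in> {d..<e}"
    by simp
  have "continuous_on UNIV (\<lambda>x. s l x u)"
    using s_linear[OF l] by (intro linear_continuous_on) (simp add: linear_conv_bounded_linear)
  then show "(\<lambda>x. gcis Pos (i l u) (- sgnb (sig ! (l - d)) * s l x u)) \<in> bcontfun"
    by (intro gcis_bcontfun i_sqneg[OF l] continuous_intros)
qed

lemma kernel_add: "kernel sig (y + z) = gprod Pos (kernel sig y) (kernel sig z)"
proof -
  have "kernel sig (y + z) = gprod_list Pos (map (\<lambda>l. gprod Pos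
      (gcis Pos (i l u) (- sgnb (sig ! (l - d)) * s l y u)) (gcis Pos (i l u) (- sgnb (sig ! (l - d)) * s l z u))) [d..<e])"
    unfolding kernel_gcis
    by (intro arg_cong[where f="gprod_list Pos"] map_cong refl) (simp add: gcis_add i_sqneg s_add algebra_simps)
  also have "\<dots> = gprod Pos (kernel sig y) (kernel sig z)"
    unfolding kernel_gcis by (rule gprod_list_map_gprod) (auto intro: gcis_commute i_commute)
  finally show ?thesis .
qed

lemma kernel_central:
  assumes "\<And>l. l \<in> {d..<e} \<Longrightarrow> f l x u \<in> gcenter Pos"
  shows "kernel sig x \<in> gcenter Pos"
  unfolding kernel_def
proof (intro gprod_list_central ballI)
  fix l
  assume "l \<in> set [d..<e]"
  then have l: "l \<in> {d..<e}"
    by simp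
  show "gexp Pos (- sgnb (sig ! (l - d)) *\<^sub>R f l x u) \<in> gcenter Pos"
    using assms[OF l] unfolding f_eq[OF l] by (rule gexp_scaleR_central[OF i_sqneg[OF l]])
qed

lemma length_blades [simp]: "length blades = e - d"
  by (simp add: blades_def)

lemma nth_blades: "k < e - d \<Longrightarrow> blades ! k = i (d + k) u"
  by (simp add: blades_def)

lemma kernel_cdecs_commute:
  assumes "length t = e - d" and "\<And>n. n < e - d \<Longrightarrow> sig' ! n = (sig ! n \<noteq> t ! n)"
  shows "gprod Pos (kernel sig x) (cdecs Pos blades t W) = gprod Pos (cdecs Pos blades t W) (kernel sig' x)"
  unfolding kernel_gcis
proof (rule gprod_list_commute, rule ballI)
  fix l
  assume l: "l \<in> set [d..<e]"
  then have k: "l - d < e - d" "d + (l - d) = l"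
    by auto
  have "\<forall>b\<in>set blades. b \<in> sqneg Pos"
    by (auto simp: blades_def intro: i_sqneg)
  moreover have "\<forall>k<length blades. \<forall>k'<length blades. k \<noteq> k' \<longrightarrow> coorthogonal Pos (blades ! k) (blades ! k')"
    by (auto simp: nth_blades intro!: i_coorthogonal)
  ultimately have "gprod Pos (i l u) (cdecs Pos blades t W) = sgnb (t ! (l - d)) *\<^sub>R gprod Pos (cdecs Pos blades t W) (i l u)"
    using cdecs_commute_sign[of blades Pos t "l - d" W] assms(1) k by (simp add: nth_blades)
  moreover have "sgnb (t ! (l - d)) * (- sgnb (sig ! (l - d)) * s l x u) = - sgnb (sig' ! (l - d)) * s l x u"
    using assms(2)[OF k(1)] by (simp add: sgnb_def)
  ultimately show
    "gprod Pos (gcis Pos (i l u) (- sgnb (sig ! (l - d)) * s l x u)) (cdecs Pos blades t W) =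
     gprod Pos (cdecs Pos blades t W) (gcis Pos (i l u) (- sgnb (sig' ! (l - d)) * s l x u))"
    by (metis gcis_commute_sign sgnb_square)
qed

lemma kernel_split_left:
  "gprod Pos (kernel (replicate (e - d) False) x) W =
    (\<Sum>t\<in>{t. length t = e - d}. gprod Pos (cdecs Pos blades t W) (kernel t x))"
proof -
  have "gprod Pos (kernel (replicate (e - d) False) x) W =
      gprod Pos (kernel (replicate (e - d) False) x) (\<Sum>t\<in>{t. length t = length blades}. cdecs Pos blades t W)"
    by (simp only: cdecs_sum)
  then show ?thesis
    by (simp add: gprod_sum_right) (rule sum.cong[OF refl], rule kernel_cdecs_commute, auto)
qed

lemma kernel_split_right:
  "gprod Pos W (kernel (replicate (e - d) False) x) =
    (\<Sum>t\<in>{t. length t = e - d}. gprod Pos (kernel t x) (cdecs Pos blades t W))"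
proof -
  have "gprod Pos W (kernel (replicate (e - d) False) x) =
      gprod Pos (\<Sum>t\<in>{t. length t = length blades}. cdecs Pos blades t W) (kernel (replicate (e - d) False) x)"
    by (simp only: cdecs_sum)
  then show ?thesis
    by (simp add: gprod_sum_left) (rule sum.cong[OF refl], rule kernel_cdecs_commute[symmetric], auto)
qed

end

text \<open>In F^{sigma,tau} the exponentials 1, ..., mu stand to the left of D (block L) and
  mu + 1, ..., nu to its right (block R).\<close>
locale two_block_transform =
  L: exp_block Pos s i f "Suc 0" "Suc mu" u + R: exp_block Pos s i f "Suc mu" "Suc nu" u
  for Pos :: "('n::{finite,linorder}) set"
    and s :: "nat \<Rightarrow> real^'m \<Rightarrow> real^'m \<Rightarrow> real"
    and i :: "nat \<Rightarrow> real^'m \<Rightarrow> 'n mv"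
    and f :: "nat \<Rightarrow> real^'m \<Rightarrow> real^'m \<Rightarrow> 'n mv"
    and mu nu :: nat
    and u :: "real^'m" +
  assumes mu_le_nu: "mu \<le> nu"
begin

lemma FT_eq_kernels:
  "FT Pos f mu nu sig tau D u = (\<integral>x. gprod Pos (gprod Pos (L.kernel sig x) (D x)) (R.kernel tau x) \<partial>lborel)"
  unfolding FT_def L.kernel_def R.kernel_def by (simp del: upt_Suc)

lemma L_split:
  "gprod Pos (L.kernel (replicate mu False) x) W =
    (\<Sum>j\<in>{j. length j = mu}. gprod Pos (cdecs Pos L.blades j W) (L.kernel j x))"
  using L.kernel_split_left by simp

lemma R_split:
  "gprod Pos W (R.kernel (replicate (nu - mu) False) x) =
    (\<Sum>k\<in>{k. length k = nu - mu}. gprod Pos (R.kernel k x) (cdecs Pos R.blades k W))"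
  using R.kernel_split_right by simp

lemma integrand_split_left:
  fixes c b :: "'n mv"
  defines "K\<^sub>L \<equiv> L.kernel (replicate mu False)" and "K\<^sub>R \<equiv> R.kernel (replicate (nu - mu) False)"
  shows "gprod Pos (gprod Pos (K\<^sub>L (y + z)) (gprod Pos c b)) (K\<^sub>R (y + z)) =
    (\<Sum>j\<in>{j. length j = mu}. \<Sum>k\<in>{k. length k = nu - mu}.
      gprod Pos (cdecs Pos L.blades j (gprod Pos (gprod Pos (K\<^sub>L y) c) (R.kernel k y)))
                (gprod Pos (gprod Pos (L.kernel j z) (cdecs Pos R.blades k b)) (K\<^sub>R z)))"
proof -
  have split_b: "gprod Pos b (K\<^sub>R y) = (\<Sum>k\<in>{k. length k = nu - mu}. gprod Pos (R.kernel k y) (cdecs Pos R.blades k b))"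
    and split_W: "gprod Pos (K\<^sub>L z) W = (\<Sum>j\<in>{j. length j = mu}. gprod Pos (cdecs Pos L.blades j W) (L.kernel j z))" for W
    by (simp_all only: K\<^sub>L_def K\<^sub>R_def L_split R_split)
  have "K\<^sub>L (y + z) = gprod Pos (K\<^sub>L z) (K\<^sub>L y)"
    using L.kernel_add[of _ z y] by (simp add: K\<^sub>L_def add.commute)
  then have "gprod Pos (gprod Pos (K\<^sub>L (y + z)) (gprod Pos c b)) (K\<^sub>R (y + z)) =
      gprod Pos (gprod Pos (K\<^sub>L z) (gprod Pos (gprod Pos (K\<^sub>L y) c) (gprod Pos b (K\<^sub>R y)))) (K\<^sub>R z)"
    by (simp only: K\<^sub>R_def R.kernel_add gprod_assoc)
  also have "\<dots> = (\<Sum>k\<in>{k. length k = nu - mu}. gprod Pos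
      (gprod Pos (K\<^sub>L z) (gprod Pos (gprod Pos (K\<^sub>L y) c) (R.kernel k y))) (gprod Pos (cdecs Pos R.blades k b) (K\<^sub>R z)))"
    by (simp only: split_b) (simp add: gprod_sum_left gprod_sum_right gprod_assoc)
  also have "\<dots> = (\<Sum>k\<in>{k. length k = nu - mu}. \<Sum>j\<in>{j. length j = mu}. gprod Pos
      (gprod Pos (cdecs Pos L.blades j (gprod Pos (gprod Pos (K\<^sub>L y) c) (R.kernel k y))) (L.kernel j z))
      (gprod Pos (cdecs Pos R.blades k b) (K\<^sub>R z)))"
    by (simp only: split_W gprod_sum_left)
  finally show ?thesis
    by (subst sum.swap) (simp only: gprod_assoc)
qed

lemma integrand_split_right:
  fixes c b :: "'n mv"
  defines "K\<^sub>L \<equiv> L.kernel (replicate mu False)" and "K\<^sub>R \<equiv> R.kernel (replicate (nu - mu) False)"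
  shows "gprod Pos (gprod Pos (K\<^sub>L (y + z)) (gprod Pos c b)) (K\<^sub>R (y + z)) =
    (\<Sum>j\<in>{j. length j = mu}. \<Sum>k\<in>{k. length k = nu - mu}.
      gprod Pos (gprod Pos (gprod Pos (K\<^sub>L y) (cdecs Pos L.blades j c)) (R.kernel k y))
                (cdecs Pos R.blades k (gprod Pos (gprod Pos (L.kernel j z) b) (K\<^sub>R z))))"
proof -
  have split_c: "gprod Pos (K\<^sub>L z) c = (\<Sum>j\<in>{j. length j = mu}. gprod Pos (cdecs Pos L.blades j c) (L.kernel j z))"
    and split_W: "gprod Pos W (K\<^sub>R y) = (\<Sum>k\<in>{k. length k = nu - mu}. gprod Pos (R.kernel k y) (cdecs Pos R.blades k W))" for W
    by (simp_all only: K\<^sub>L_def K\<^sub>R_def L_split R_split)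
  have "K\<^sub>R (y + z) = gprod Pos (K\<^sub>R z) (K\<^sub>R y)"
    using R.kernel_add[of _ z y] by (simp add: K\<^sub>R_def add.commute)
  then have "gprod Pos (gprod Pos (K\<^sub>L (y + z)) (gprod Pos c b)) (K\<^sub>R (y + z)) =
      gprod Pos (K\<^sub>L y) (gprod Pos (gprod Pos (K\<^sub>L z) c) (gprod Pos (gprod Pos b (K\<^sub>R z)) (K\<^sub>R y)))"
    by (simp only: K\<^sub>L_def L.kernel_add gprod_assoc)
  also have "\<dots> = (\<Sum>j\<in>{j. length j = mu}. gprod Pos (K\<^sub>L y)
      (gprod Pos (cdecs Pos L.blades j c) (gprod Pos (gprod Pos (gprod Pos (L.kernel j z) b) (K\<^sub>R z)) (K\<^sub>R y))))"
    by (simp only: split_c) (simp add: gprod_sum_left gprod_sum_right gprod_assoc)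
  also have "\<dots> = (\<Sum>j\<in>{j. length j = mu}. \<Sum>k\<in>{k. length k = nu - mu}. gprod Pos (K\<^sub>L y)
      (gprod Pos (cdecs Pos L.blades j c) (gprod Pos (R.kernel k y)
        (cdecs Pos R.blades k (gprod Pos (gprod Pos (L.kernel j z) b) (K\<^sub>R z))))))"
    by (simp only: split_W gprod_sum_right)
  finally show ?thesis
    by (simp only: gprod_assoc)
qed

lemma integrand_split_central:
  fixes c b :: "'n mv"
  assumes central: "\<And>l x. l \<in> {1..nu} \<Longrightarrow> f l x u \<in> gcenter Pos"
  defines "K\<^sub>L \<equiv> L.kernel (replicate mu False)" and "K\<^sub>R \<equiv> R.kernel (replicate (nu - mu) False)"
  shows "gprod Pos (gprod Pos (K\<^sub>L (y + z)) (gprod Pos c b)) (K\<^sub>R (y + z)) =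
    gprod Pos (gprod Pos (gprod Pos (K\<^sub>L y) c) (K\<^sub>R y)) (gprod Pos (gprod Pos (K\<^sub>L z) b) (K\<^sub>R z))"
proof -
  have "K\<^sub>L z \<in> gcenter Pos" "K\<^sub>R y \<in> gcenter Pos"
    unfolding K\<^sub>L_def K\<^sub>R_def using mu_le_nu
    by (intro L.kernel_central R.kernel_central central; simp)+
  note swap = this[THEN gcenter_left_commute]
  have "gprod Pos (gprod Pos (K\<^sub>L (y + z)) (gprod Pos c b)) (K\<^sub>R (y + z)) =
      gprod Pos (K\<^sub>L y) (gprod Pos (K\<^sub>L z) (gprod Pos c (gprod Pos b (gprod Pos (K\<^sub>R y) (K\<^sub>R z)))))"
    by (simp only: K\<^sub>L_def K\<^sub>R_def L.kernel_add R.kernel_add gprod_assoc)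
  also have "gprod Pos b (gprod Pos (K\<^sub>R y) (K\<^sub>R z)) = gprod Pos (K\<^sub>R y) (gprod Pos b (K\<^sub>R z))"
    by (rule swap(2)[symmetric])
  also have "gprod Pos (K\<^sub>L z) (gprod Pos c (gprod Pos (K\<^sub>R y) (gprod Pos b (K\<^sub>R z)))) =
      gprod Pos c (gprod Pos (K\<^sub>R y) (gprod Pos (K\<^sub>L z) (gprod Pos b (K\<^sub>R z))))"
    by (simp only: swap(1)[where y = c] swap(1)[where y = "K\<^sub>R y"])
  finally show ?thesis
    by (simp add: gprod_assoc)
qed

lemma integrable_kernel_sandwich:
  "integrable lborel D \<Longrightarrow> integrable lborel (\<lambda>x. gprod Pos (gprod Pos (L.kernel sig x) (D x)) (R.kernel tau x))"
  by (intro integrable_gprod_bcontfun L.kernel_bcontfun R.kernel_bcontfun)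

lemma FT_cdecs:
  assumes "integrable lborel D"
  shows "(\<integral>x. cdecs Pos bs ts (gprod Pos (gprod Pos (L.kernel sig x) (D x)) (R.kernel tau x)) \<partial>lborel) =
    cdecs Pos bs ts (FT Pos f mu nu sig tau D u)"
  unfolding FT_eq_kernels
  by (rule integral_bounded_linear[OF bounded_linear_cdecs integrable_kernel_sandwich[OF assms]])

theorem FT_convolution_split_left:
  assumes B: "integrable lborel B" and C: "integrable lborel C"
  shows "FT Pos f mu nu (replicate mu False) (replicate (nu - mu) False) (gconv Pos C B) u =
    (\<Sum>j\<in>{j. length j = mu}. \<Sum>k\<in>{k. length k = nu - mu}.
      gprod Pos (cdecs Pos L.blades j (FT Pos f mu nu (replicate mu False) k C u))
                (FT Pos f mu nu j (replicate (nu - mu) False) (\<lambda>x. cdecs Pos R.blades k (B x)) u))"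
proof -
  define G where "G p y = cdecs Pos L.blades (fst p)
    (gprod Pos (gprod Pos (L.kernel (replicate mu False) y) (C y)) (R.kernel (snd p) y))" for p y
  define H where "H p z = gprod Pos (gprod Pos (L.kernel (fst p) z) (cdecs Pos R.blades (snd p) (B z)))
    (R.kernel (replicate (nu - mu) False) z)" for p z
  have "FT Pos f mu nu (replicate mu False) (replicate (nu - mu) False) (gconv Pos C B) u =
      (\<Sum>p\<in>{j. length j = mu} \<times> {k. length k = nu - mu}.
        gprod Pos (\<integral>y. G p y \<partial>lborel) (\<integral>z. H p z \<partial>lborel))"
    unfolding FT_eq_kernels
  proof (rule integral_convolution_sandwich_split[OF L.kernel_bcontfun R.kernel_bcontfun B C])
    show "integrable lborel (G p)" "integrable lborel (H p)" for p
      unfolding G_def H_def by (intro integrable_cdecs integrable_kernel_sandwich C) (intro integrable_kernel_sandwich integrable_cdecs B)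
    show "gprod Pos (gprod Pos (L.kernel (replicate mu False) (y + z)) (gprod Pos (C y) (B z)))
        (R.kernel (replicate (nu - mu) False) (y + z)) =
      (\<Sum>p\<in>{j. length j = mu} \<times> {k. length k = nu - mu}. gprod Pos (G p y) (H p z))" for y z
      unfolding G_def H_def integrand_split_left by (simp add: sum.cartesian_product split_beta)
  qed
  then show ?thesis
    by (simp add: sum.cartesian_product split_beta G_def H_def FT_cdecs[OF C] FT_eq_kernels)
qed

theorem FT_convolution_split_right:
  assumes B: "integrable lborel B" and C: "integrable lborel C"
  shows "FT Pos f mu nu (replicate mu False) (replicate (nu - mu) False) (gconv Pos C B) u =
    (\<Sum>j\<in>{j. length j = mu}. \<Sum>k\<in>{k. length k = nu - mu}.
      gprod Pos (FT Pos f mu nu (replicate mu False) k (\<lambda>x. cdecs Pos L.blades j (C x)) u)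
                (cdecs Pos R.blades k (FT Pos f mu nu j (replicate (nu - mu) False) B u)))"
proof -
  define G where "G p y = gprod Pos (gprod Pos (L.kernel (replicate mu False) y) (cdecs Pos L.blades (fst p) (C y)))
    (R.kernel (snd p) y)" for p y
  define H where "H p z = cdecs Pos R.blades (snd p)
    (gprod Pos (gprod Pos (L.kernel (fst p) z) (B z)) (R.kernel (replicate (nu - mu) False) z))" for p z
  have "FT Pos f mu nu (replicate mu False) (replicate (nu - mu) False) (gconv Pos C B) u =
      (\<Sum>p\<in>{j. length j = mu} \<times> {k. length k = nu - mu}.
        gprod Pos (\<integral>y. G p y \<partial>lborel) (\<integral>z. H p z \<partial>lborel))"
    unfolding FT_eq_kernels
  proof (rule integral_convolution_sandwich_split[OF L.kernel_bcontfun R.kernel_bcontfun B C])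
    show "integrable lborel (G p)" "integrable lborel (H p)" for p
      unfolding G_def H_def by (intro integrable_kernel_sandwich integrable_cdecs C) (intro integrable_cdecs integrable_kernel_sandwich B)
    show "gprod Pos (gprod Pos (L.kernel (replicate mu False) (y + z)) (gprod Pos (C y) (B z)))
        (R.kernel (replicate (nu - mu) False) (y + z)) =
      (\<Sum>p\<in>{j. length j = mu} \<times> {k. length k = nu - mu}. gprod Pos (G p y) (H p z))" for y z
      unfolding G_def H_def integrand_split_right by (simp add: sum.cartesian_product split_beta)
  qed
  then show ?thesis
    by (simp add: sum.cartesian_product split_beta G_def H_def FT_cdecs[OF B] FT_eq_kernels)
qed

theorem FT_convolution_central:
  assumes B: "integrable lborel B" and C: "integrable lborel C"
    and central: "\<And>l x. l \<in> {1..nu} \<Longrightarrow> f l x u \<in> gcenter Pos"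
  shows "FT Pos f mu nu (replicate mu False) (replicate (nu - mu) False) (gconv Pos C B) u =
    gprod Pos (FT Pos f mu nu (replicate mu False) (replicate (nu - mu) False) C u)
              (FT Pos f mu nu (replicate mu False) (replicate (nu - mu) False) B u)"
proof -
  define K\<^sub>L K\<^sub>R where "K\<^sub>L = L.kernel (replicate mu False)" and "K\<^sub>R = R.kernel (replicate (nu - mu) False)"
  have "(\<integral>x. gprod Pos (gprod Pos (K\<^sub>L x) (gconv Pos C B x)) (K\<^sub>R x) \<partial>lborel) =
      (\<Sum>p\<in>{()}. gprod Pos (\<integral>y. gprod Pos (gprod Pos (K\<^sub>L y) (C y)) (K\<^sub>R y) \<partial>lborel)
                             (\<integral>z. gprod Pos (gprod Pos (K\<^sub>L z) (B z)) (K\<^sub>R z) \<partial>lborel))"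
    unfolding K\<^sub>L_def K\<^sub>R_def
  proof (rule integral_convolution_sandwich_split[OF L.kernel_bcontfun R.kernel_bcontfun B C])
    show "gprod Pos (gprod Pos (L.kernel (replicate mu False) (y + z)) (gprod Pos (C y) (B z)))
        (R.kernel (replicate (nu - mu) False) (y + z)) =
      (\<Sum>p\<in>{()}. gprod Pos (gprod Pos (gprod Pos (L.kernel (replicate mu False) y) (C y)) (R.kernel (replicate (nu - mu) False) y))
        (gprod Pos (gprod Pos (L.kernel (replicate mu False) z) (B z)) (R.kernel (replicate (nu - mu) False) z)))" for y z
      using integrand_split_central[OF central] by simp
  qed (simp_all add: integrable_kernel_sandwich B C)
  then show ?thesis
    by (simp add: FT_eq_kernels K\<^sub>L_def K\<^sub>R_def)
qed

end

theorem corollary4p11: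
  fixes Pos :: "('n::{finite,linorder}) set"
    and mu nu :: nat
    and s :: "nat \<Rightarrow> real^'m \<Rightarrow> real^'m \<Rightarrow> real"
    and i :: "nat \<Rightarrow> real^'m \<Rightarrow> 'n mv"
    and f :: "nat \<Rightarrow> real^'m \<Rightarrow> real^'m \<Rightarrow> 'n mv"
    and B C :: "real^'m \<Rightarrow> 'n mv"
    and u :: "real^'m"
  assumes munu: "mu \<le> nu"
    and f_def: "\<And>l x v. l \<in> {1..nu} \<Longrightarrow> f l x v = s l x v *\<^sub>R i l v"
    and s_lin: "\<And>l v. l \<in> {1..nu} \<Longrightarrow> linear (\<lambda>x. s l x v)"
    and i_sq: "\<And>l v. l \<in> {1..nu} \<Longrightarrow> i l v \<in> sqneg Pos"
    and i_blade: "\<And>l v. l \<in> {1..nu} \<Longrightarrow> is_blade Pos (i l v)"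
    and i_coorth: "\<And>l l' v. l \<in> {1..nu} \<Longrightarrow> l' \<in> {1..nu} \<Longrightarrow> l \<noteq> l' \<Longrightarrow>
                     coorthogonal Pos (i l v) (i l' v)"
    and i_comm1: "\<And>l l' v. l \<in> {1..mu} \<Longrightarrow> l' \<in> {1..mu} \<Longrightarrow>
                     gprod Pos (i l v) (i l' v) = gprod Pos (i l' v) (i l v)"
    and i_comm2: "\<And>l l' v. l \<in> {mu+1..nu} \<Longrightarrow> l' \<in> {mu+1..nu} \<Longrightarrow>
                     gprod Pos (i l v) (i l' v) = gprod Pos (i l' v) (i l v)"
    and B_int: "integrable lborel B"
    and C_int: "integrable lborel C"
  shows
    "FT Pos f mu nu (replicate mu False) (replicate (nu - mu) False) (gconv Pos C B) u =
       (\<Sum>j\<in>{js. length js = mu}. \<Sum>k\<in>{ks. length ks = nu - mu}.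
          gprod Pos
            (cdecs Pos (map (\<lambda>l. i l u) [1..<mu+1]) j
               (FT Pos f mu nu (replicate mu False) k C u))
            (FT Pos f mu nu j (replicate (nu - mu) False)
               (\<lambda>x. cdecs Pos (map (\<lambda>l. i l u) [mu+1..<nu+1]) k (B x)) u))
   \<and> FT Pos f mu nu (replicate mu False) (replicate (nu - mu) False) (gconv Pos C B) u =
       (\<Sum>j\<in>{js. length js = mu}. \<Sum>k\<in>{ks. length ks = nu - mu}.
          gprod Pos
            (FT Pos f mu nu (replicate mu False) k
               (\<lambda>x. cdecs Pos (map (\<lambda>l. i l u) [1..<mu+1]) j (C x)) u)
            (cdecs Pos (map (\<lambda>l. i l u) [mu+1..<nu+1]) k
               (FT Pos f mu nu j (replicate (nu - mu) False) B u)))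
   \<and> ((\<forall>l\<in>{1..nu}. \<forall>x v. f l x v \<in> gcenter Pos) \<longrightarrow>
       FT Pos f mu nu (replicate mu False) (replicate (nu - mu) False) (gconv Pos C B) u =
         gprod Pos (FT Pos f mu nu (replicate mu False) (replicate (nu - mu) False) C u)
                   (FT Pos f mu nu (replicate mu False) (replicate (nu - mu) False) B u))"
proof -
  have "exp_block Pos s i f (Suc 0) (Suc mu) u"
    unfolding exp_block_def using munu by (auto simp: f_def intro!: s_lin i_sq i_coorth i_comm1)
  moreover have "exp_block Pos s i f (Suc mu) (Suc nu) u"
    unfolding exp_block_def by (auto simp: f_def intro!: s_lin i_sq i_coorth i_comm2)
  ultimately interpret two_block_transform Pos s i f mu nu u
    using munu by (simp add: two_block_transform_def two_block_transform_axioms_def)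
  have "L.blades = map (\<lambda>l. i l u) [1..<mu+1]" and "R.blades = map (\<lambda>l. i l u) [mu+1..<nu+1]"
    by (simp_all add: L.blades_def R.blades_def)
  then show ?thesis
    using FT_convolution_split_left[OF B_int C_int] FT_convolution_split_right[OF B_int C_int]
      FT_convolution_central[OF B_int C_int]
    by auto
qed

end
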